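(* There exists an absolute constant $\varepsilon_0>0$ such that for the gossip USD, every $n$ and every $t\ge1$: if $\beta_{t-1}\ge\frac12-\varepsilon_0$, $\psi_{t-1}\le\varepsilon_0$ and $\gamma_{t-1}\le\varepsilon_0$, then $$\mathbb E_{t-1}[\widetilde\gamma_t]\ge\widetilde\gamma_{t-1}+\frac{1}{12n}.$$
   Context: Vertex set $V$, $|V|=n$; opinions in $\Sigma=[k]\cup\{\bot\}$ ($\bot$ = undecided). USD update rule: $\mathsf{update}(\sigma_1,\sigma_2)=\bot$ if $\sigma_1,\sigma_2\in[k]$ and $\sigma_1\ne\sigma_2$; $=\sigma_2$ if $\sigma_1=\bot$; $=\sigma_1$ otherwise. Gossip USD: given $\mathrm{opn}_t\in\Sigma^V$, every $u\in V$ independently picks $v$ uniformly from $V$ and sets $\mathrm{opn}_{t+1}(u)=\mathsf{update}(\mathrm{opn}_t(u),\mathrm{opn}_t(v))$. Notation: $\alpha_t(i)=|\{u:\mathrm{opn}_t(u)=i\}|/n$, $\beta_t=\sum_{i\in[k]}\alpha_t(i)$, $\gamma_t=\sum_{i\in[k]}\alpha_t(i)^2$, $\psi_t=\beta_t(2\beta_t-1)-\gamma_t$, and $\widetilde\gamma_t=\gamma_t/\beta_t^2$ if $\beta_t>0$, $\widetilde\gamma_t=0$ if $\beta_t=0$. $\mathbb E_{t-1}$ is conditional expectation given the natural filtration $\mathcal F_{t-1}$. *)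

theory Defs
  imports "HOL-Probability.Probability"
begin

text \<open>Opinions: None is the undecided opinion, Some i with 1 \<le> i \<le> k a decided opinion.
  Vertices are natural numbers in a finite vertex set V.\<close>

fun usd_update :: "nat option \<Rightarrow> nat option \<Rightarrow> nat option" where
  "usd_update (Some a) (Some b) = (if a \<noteq> b then None else Some a)"
| "usd_update None s = s"
| "usd_update (Some a) None = Some a"

definition valid_config :: "nat \<Rightarrow> nat set \<Rightarrow> (nat \<Rightarrow> nat option) \<Rightarrow> bool" where
  "valid_config k V opn \<longleftrightarrow> (\<forall>u\<in>V. opn u = None \<or> (\<exists>i\<in>{1..k}. opn u = Some i))"

definition gossip_step :: "nat set \<Rightarrow> (nat \<Rightarrow> nat option) \<Rightarrow> (nat \<Rightarrow> nat option) pmf" where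
  "gossip_step V opn =
     map_pmf (\<lambda>c u. if u \<in> V then usd_update (opn u) (opn (c u)) else opn u)
       (Pi_pmf V 0 (\<lambda>_. pmf_of_set V))"

definition alpha :: "nat set \<Rightarrow> (nat \<Rightarrow> nat option) \<Rightarrow> nat \<Rightarrow> real" where
  "alpha V opn i = real (card {u\<in>V. opn u = Some i}) / real (card V)"

definition beta :: "nat \<Rightarrow> nat set \<Rightarrow> (nat \<Rightarrow> nat option) \<Rightarrow> real" where
  "beta k V opn = (\<Sum>i\<in>{1..k}. alpha V opn i)"

definition gamma :: "nat \<Rightarrow> nat set \<Rightarrow> (nat \<Rightarrow> nat option) \<Rightarrow> real" where
  "gamma k V opn = (\<Sum>i\<in>{1..k}. (alpha V opn i)^2)"

definition psi :: "nat \<Rightarrow> nat set \<Rightarrow> (nat \<Rightarrow> nat option) \<Rightarrow> real" where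
  "psi k V opn = beta k V opn * (2 * beta k V opn - 1) - gamma k V opn"

definition gamma_tilde :: "nat \<Rightarrow> nat set \<Rightarrow> (nat \<Rightarrow> nat option) \<Rightarrow> real" where
  "gamma_tilde k V opn = (if beta k V opn > 0 then gamma k V opn / (beta k V opn)^2 else 0)"

end

theory Submission
  imports Defs
begin

text \<open>Let \<open>X\<^sub>i\<close> be the number of vertices holding opinion \<open>i\<close> after the round: a sum
  over the vertices of independent indicators. The new value of \<open>gamma_tilde\<close> is \<open>A / Y\<^sup>2\<close>
  with \<open>A = \<Sum>\<^sub>i X\<^sub>i\<^sup>2\<close> and \<open>Y = \<Sum>\<^sub>i X\<^sub>i\<close>. Since \<open>1 / y\<^sup>2\<close> lies above its tangent
  at \<open>c = E Y\<close>, \<open>A / Y\<^sup>2 \<ge> 3 A / c\<^sup>2 - 2 A Y / c\<^sup>3\<close>, and independence expresses \<open>E A\<close> and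
  bounds \<open>E (A Y)\<close> through the means \<open>m\<^sub>i\<close> and variances \<open>v\<^sub>i\<close> of the \<open>X\<^sub>i\<close>, so that the
  new expected value is at least \<open>\<Sum>\<^sub>i (m\<^sub>i\<^sup>2 + v\<^sub>i) / c\<^sup>2 - 2 / c\<^sup>2 - 4 \<Sum>\<^sub>i m\<^sub>i\<^sup>2 / c\<^sup>3\<close>.
  In expectation the USD multiplies the count \<open>x\<^sub>i\<close> by \<open>(2 u + x\<^sub>i) / n\<close> (\<open>u\<close> undecided
  vertices), a factor increasing in \<open>x\<^sub>i\<close>; Chebyshev's sum inequality and Cauchy-Schwarz then
  show that \<open>\<Sum>\<^sub>i m\<^sub>i\<^sup>2 / c\<^sup>2\<close> is at least the old \<open>gamma_tilde\<close>. The drift comes from the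
  variances: near \<open>\<beta> = 1/2\<close> with small \<open>\<gamma>\<close>, \<open>c \<approx> n / 2\<close> and \<open>\<Sum>\<^sub>i v\<^sub>i / c\<^sup>2 \<approx> 3 / (2 n)\<close>,
  while both error terms are \<open>O(\<gamma> / n)\<close>; for \<open>2 / c\<^sup>2\<close> this uses \<open>\<beta> / n \<le> \<gamma>\<close>, which
  holds because the counts are integers.\<close>

section \<open>Sums of independent coordinates\<close>

abbreviation expect :: "'a pmf \<Rightarrow> ('a \<Rightarrow> real) \<Rightarrow> real" where
  "expect p f \<equiv> measure_pmf.expectation p f"

lemma finite_set_Pi_pmf:
  assumes "finite W" "\<And>v. v \<in> W \<Longrightarrow> finite (set_pmf (P v))"
  shows "finite (set_pmf (Pi_pmf W d P))"
  using assms by (auto simp: set_Pi_pmf intro!: finite_PiE_dflt)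

lemma expectation_pair_pmf_iterated:
  assumes "finite (set_pmf p)" "finite (set_pmf q)"
  shows "expect (pair_pmf p q) F = expect p (\<lambda>y. expect q (\<lambda>z. F (y, z)))"
proof -
  have "expect (pair_pmf p q) F = (\<Sum>yz\<in>set_pmf p \<times> set_pmf q. F yz * pmf (pair_pmf p q) yz)"
    by (rule integral_measure_pmf_real) (use assms in auto)
  also have "\<dots> = (\<Sum>(y, z)\<in>set_pmf p \<times> set_pmf q. F (y, z) * pmf q z * pmf p y)"
    by (intro sum.cong) (auto simp: pmf_pair)
  also have "\<dots> = (\<Sum>y\<in>set_pmf p. (\<Sum>z\<in>set_pmf q. F (y, z) * pmf q z) * pmf p y)"
    by (simp add: sum.cartesian_product[symmetric] sum_distrib_right)
  also have "\<dots> = expect p (\<lambda>y. expect q (\<lambda>z. F (y, z)))"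
    using assms by (simp add: integral_measure_pmf_real)
  finally show ?thesis .
qed

lemma expectation_Pi_pmf_insert:
  assumes "finite A" "x \<notin> A" "\<And>v. v \<in> insert x A \<Longrightarrow> finite (set_pmf (P v))"
  shows "expect (Pi_pmf (insert x A) d P) F =
    expect (P x) (\<lambda>y. expect (Pi_pmf A d P) (\<lambda>f. F (f(x := y))))"
  using assms by (simp add: Pi_pmf_insert case_prod_beta expectation_pair_pmf_iterated finite_set_Pi_pmf)

lemma sum_insert_fun_upd:
  assumes "finite A" "x \<notin> A"
  shows "(\<Sum>v\<in>insert x A. a v ((f(x := y)) v)) = a x y + (\<Sum>v\<in>A. a v (f v))"
proof -
  have "(\<Sum>v\<in>A. a v ((f(x := y)) v)) = (\<Sum>v\<in>A. a v (f v))"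
    using assms(2) by (intro sum.cong) auto
  then show ?thesis
    using assms by simp
qed

lemma expectation_sum_Pi_pmf:
  assumes "finite W" "\<And>v. v \<in> W \<Longrightarrow> finite (set_pmf (P v))"
  shows "expect (Pi_pmf W d P) (\<lambda>f. \<Sum>v\<in>W. a v (f v)) = (\<Sum>v\<in>W. expect (P v) (a v))"
proof -
  have "expect (Pi_pmf W d P) (\<lambda>f. a v (f v)) = expect (P v) (a v)" if "v \<in> W" for v
    using that Pi_pmf_component[OF assms(1), of v d P]
    by (metis integral_map_pmf)
  then show ?thesis
    using assms by (simp add: Bochner_Integration.integral_sum integrable_measure_pmf_finite finite_set_Pi_pmf)
qed

lemma expectation_sum_squared_Pi_pmf:
  assumes "finite W" "\<And>v. v \<in> W \<Longrightarrow> finite (set_pmf (P v))"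
  shows "expect (Pi_pmf W d P) (\<lambda>f. (\<Sum>v\<in>W. a v (f v))\<^sup>2) =
    (\<Sum>v\<in>W. expect (P v) (a v))\<^sup>2 + (\<Sum>v\<in>W. expect (P v) (\<lambda>y. (a v y)\<^sup>2) - (expect (P v) (a v))\<^sup>2)"
  using assms
proof (induction W rule: finite_induct)
  case (insert x A)
  let ?M = "Pi_pmf A d P"
  define S where "S f = (\<Sum>v\<in>A. a v (f v))" for f
  have fin: "finite (set_pmf ?M)" "finite (set_pmf (P x))"
    using insert by (auto intro: finite_set_Pi_pmf)
  have "expect (Pi_pmf (insert x A) d P) (\<lambda>f. (\<Sum>v\<in>insert x A. a v (f v))\<^sup>2)
     = expect (P x) (\<lambda>y. expect ?M (\<lambda>f. (a x y + S f)\<^sup>2))"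
    by (simp only: expectation_Pi_pmf_insert[OF insert.hyps insert.prems] sum_insert_fun_upd[OF insert.hyps] S_def)
  also have "\<dots> = expect (P x) (\<lambda>y. (a x y)\<^sup>2) + 2 * expect (P x) (a x) * expect ?M S + expect ?M (\<lambda>f. (S f)\<^sup>2)"
    using fin by (simp add: power2_sum integrable_measure_pmf_finite)
  also have "expect ?M S = (\<Sum>v\<in>A. expect (P v) (a v))"
    unfolding S_def using insert by (simp add: expectation_sum_Pi_pmf)
  finally show ?case
    using insert by (simp add: S_def power2_sum algebra_simps)
qed simp

lemma expectation_sum_mult_sum_Pi_pmf_le:
  assumes "finite W" "\<And>v. v \<in> W \<Longrightarrow> finite (set_pmf (P v))"
    and "\<And>v y. 0 \<le> a v y" "\<And>v y. 0 \<le> b v y" "\<And>v y. b v y \<le> 1"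
  shows "expect (Pi_pmf W d P) (\<lambda>f. (\<Sum>v\<in>W. a v (f v)) * (\<Sum>v\<in>W. b v (f v))) \<le>
    (\<Sum>v\<in>W. expect (P v) (a v)) * (\<Sum>v\<in>W. expect (P v) (b v)) + (\<Sum>v\<in>W. expect (P v) (a v))"
  using assms(1,2)
proof (induction W rule: finite_induct)
  case (insert x A)
  let ?M = "Pi_pmf A d P"
  define S where "S f = (\<Sum>v\<in>A. a v (f v))" for f
  define T where "T f = (\<Sum>v\<in>A. b v (f v))" for f
  define \<sigma> where "\<sigma> = (\<Sum>v\<in>A. expect (P v) (a v))"
  define \<tau> where "\<tau> = (\<Sum>v\<in>A. expect (P v) (b v))"
  have fin: "finite (set_pmf ?M)" "finite (set_pmf (P x))"
    using insert by (auto intro: finite_set_Pi_pmf)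
  have "expect (Pi_pmf (insert x A) d P) (\<lambda>f. (\<Sum>v\<in>insert x A. a v (f v)) * (\<Sum>v\<in>insert x A. b v (f v)))
     = expect (P x) (\<lambda>y. expect ?M (\<lambda>f. (a x y + S f) * (b x y + T f)))"
    by (simp only: expectation_Pi_pmf_insert[OF insert.hyps insert.prems] sum_insert_fun_upd[OF insert.hyps] S_def T_def)
  also have "\<dots> = expect (P x) (\<lambda>y. a x y * b x y) + expect (P x) (a x) * expect ?M T
      + expect (P x) (b x) * expect ?M S + expect ?M (\<lambda>f. S f * T f)"
    using fin by (simp add: algebra_simps integrable_measure_pmf_finite)
  finally have step: "expect (Pi_pmf (insert x A) d P) (\<lambda>f. (\<Sum>v\<in>insert x A. a v (f v)) * (\<Sum>v\<in>insert x A. b v (f v)))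
     = expect (P x) (\<lambda>y. a x y * b x y) + expect (P x) (a x) * expect ?M T
      + expect (P x) (b x) * expect ?M S + expect ?M (\<lambda>f. S f * T f)" .
  have means: "expect ?M S = \<sigma>" "expect ?M T = \<tau>"
    unfolding S_def T_def \<sigma>_def \<tau>_def using insert by (simp_all add: expectation_sum_Pi_pmf)
  have "expect (P x) (\<lambda>y. a x y * b x y) \<le> expect (P x) (a x)"
    using fin assms(3-5) by (intro integral_mono integrable_measure_pmf_finite) (auto intro: mult_left_le)
  moreover have "expect ?M (\<lambda>f. S f * T f) \<le> \<sigma> * \<tau> + \<sigma>"
    using insert.IH insert.prems by (simp add: S_def T_def \<sigma>_def \<tau>_def)
  moreover have "0 \<le> expect (P x) (a x) * expect (P x) (b x)"
    using assms(3,4) by simp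
  ultimately show ?case
    using insert.hyps unfolding step means by (simp add: \<sigma>_def \<tau>_def algebra_simps)
qed simp

lemma third_moment_step:
  fixes \<alpha> \<beta> \<sigma> \<tau> p q r X Y Z :: real
  assumes "r \<le> \<alpha>" "p \<le> \<alpha>" "X \<le> \<sigma> * \<tau> + \<sigma>" "Z \<le> Y * \<tau> + \<sigma> + 2 * \<sigma>\<^sup>2"
    and "0 \<le> \<alpha>" "0 \<le> \<beta>" "0 \<le> \<sigma>" "0 \<le> q"
  shows "r + q * \<tau> + 2 * p * \<sigma> + 2 * \<alpha> * X + \<beta> * Y + Z
    \<le> (q + 2 * \<alpha> * \<sigma> + Y) * (\<beta> + \<tau>) + (\<alpha> + \<sigma>) + 2 * (\<alpha> + \<sigma>)\<^sup>2"
proof -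
  have "2 * p * \<sigma> \<le> 2 * \<alpha> * \<sigma>"
    using assms(2,7) by (simp add: mult_right_mono)
  moreover have "2 * \<alpha> * X \<le> 2 * \<alpha> * (\<sigma> * \<tau> + \<sigma>)"
    using assms(3,5) by (simp add: mult_left_mono)
  moreover have "0 \<le> q * \<beta> + 2 * \<alpha> * \<sigma> * \<beta> + 2 * \<alpha>\<^sup>2"
    using assms(5-8) by simp
  moreover have "(q + 2 * \<alpha> * \<sigma> + Y) * (\<beta> + \<tau>) + (\<alpha> + \<sigma>) + 2 * (\<alpha> + \<sigma>)\<^sup>2
      = (q * \<beta> + 2 * \<alpha> * \<sigma> * \<beta> + 2 * \<alpha>\<^sup>2) + (\<alpha> + q * \<tau> + 2 * \<alpha> * \<sigma>
        + 2 * \<alpha> * (\<sigma> * \<tau> + \<sigma>) + \<beta> * Y + (Y * \<tau> + \<sigma> + 2 * \<sigma>\<^sup>2))"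
    by (simp add: algebra_simps power2_eq_square)
  ultimately show ?thesis
    using assms(1,4) by linarith
qed

lemma expectation_sum_squared_mult_sum_Pi_pmf_le:
  assumes "finite W" "\<And>v. v \<in> W \<Longrightarrow> finite (set_pmf (P v))"
    and "\<And>v y. 0 \<le> a v y" "\<And>v y. a v y \<le> 1" "\<And>v y. 0 \<le> b v y" "\<And>v y. b v y \<le> 1"
  shows "expect (Pi_pmf W d P) (\<lambda>f. (\<Sum>v\<in>W. a v (f v))\<^sup>2 * (\<Sum>v\<in>W. b v (f v))) \<le>
    expect (Pi_pmf W d P) (\<lambda>f. (\<Sum>v\<in>W. a v (f v))\<^sup>2) * (\<Sum>v\<in>W. expect (P v) (b v))
    + (\<Sum>v\<in>W. expect (P v) (a v)) + 2 * (\<Sum>v\<in>W. expect (P v) (a v))\<^sup>2"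
  using assms(1,2)
proof (induction W rule: finite_induct)
  case (insert x A)
  let ?M = "Pi_pmf A d P"
  define S where "S f = (\<Sum>v\<in>A. a v (f v))" for f
  define T where "T f = (\<Sum>v\<in>A. b v (f v))" for f
  define \<sigma> where "\<sigma> = (\<Sum>v\<in>A. expect (P v) (a v))"
  define \<tau> where "\<tau> = (\<Sum>v\<in>A. expect (P v) (b v))"
  define \<alpha> where "\<alpha> = expect (P x) (a x)"
  define \<beta> where "\<beta> = expect (P x) (b x)"
  define q where "q = expect (P x) (\<lambda>y. (a x y)\<^sup>2)"
  have fin: "finite (set_pmf ?M)" "finite (set_pmf (P x))"
    using insert by (auto intro: finite_set_Pi_pmf)
  have means: "expect ?M S = \<sigma>" "expect ?M T = \<tau>"
    unfolding S_def T_def \<sigma>_def \<tau>_def using insert by (simp_all add: expectation_sum_Pi_pmf)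
  have sums: "(\<Sum>v\<in>insert x A. expect (P v) (a v)) = \<alpha> + \<sigma>" "(\<Sum>v\<in>insert x A. expect (P v) (b v)) = \<beta> + \<tau>"
    using insert.hyps by (simp_all add: \<alpha>_def \<beta>_def \<sigma>_def \<tau>_def)
  have "expect (Pi_pmf (insert x A) d P) (\<lambda>f. (\<Sum>v\<in>insert x A. a v (f v))\<^sup>2)
     = expect (P x) (\<lambda>y. expect ?M (\<lambda>f. (a x y + S f)\<^sup>2))"
    by (simp only: expectation_Pi_pmf_insert[OF insert.hyps insert.prems] sum_insert_fun_upd[OF insert.hyps] S_def)
  also have "\<dots> = q + 2 * \<alpha> * \<sigma> + expect ?M (\<lambda>f. (S f)\<^sup>2)"
    unfolding q_def \<alpha>_def using fin by (simp add: power2_sum integrable_measure_pmf_finite means)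
  finally have second: "expect (Pi_pmf (insert x A) d P) (\<lambda>f. (\<Sum>v\<in>insert x A. a v (f v))\<^sup>2)
     = q + 2 * \<alpha> * \<sigma> + expect ?M (\<lambda>f. (S f)\<^sup>2)" .
  have "expect (Pi_pmf (insert x A) d P) (\<lambda>f. (\<Sum>v\<in>insert x A. a v (f v))\<^sup>2 * (\<Sum>v\<in>insert x A. b v (f v)))
     = expect (P x) (\<lambda>y. expect ?M (\<lambda>f. (a x y + S f)\<^sup>2 * (b x y + T f)))"
    by (simp only: expectation_Pi_pmf_insert[OF insert.hyps insert.prems] sum_insert_fun_upd[OF insert.hyps] S_def T_def)
  also have "\<dots> = expect (P x) (\<lambda>y. (a x y)\<^sup>2 * b x y) + q * \<tau> + 2 * expect (P x) (\<lambda>y. a x y * b x y) * \<sigma>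
      + 2 * \<alpha> * expect ?M (\<lambda>f. S f * T f) + \<beta> * expect ?M (\<lambda>f. (S f)\<^sup>2) + expect ?M (\<lambda>f. (S f)\<^sup>2 * T f)"
    unfolding q_def \<alpha>_def \<beta>_def using fin
    by (simp add: power2_sum distrib_left distrib_right mult.assoc mult.left_commute[of _ \<sigma>] integrable_measure_pmf_finite means)
  also have "\<dots> \<le> (q + 2 * \<alpha> * \<sigma> + expect ?M (\<lambda>f. (S f)\<^sup>2)) * (\<beta> + \<tau>) + (\<alpha> + \<sigma>) + 2 * (\<alpha> + \<sigma>)\<^sup>2"
  proof (rule third_moment_step)
    show "expect (P x) (\<lambda>y. (a x y)\<^sup>2 * b x y) \<le> \<alpha>"
      unfolding \<alpha>_def using fin assms(3-6)
      by (intro integral_mono integrable_measure_pmf_finite) (auto simp: power2_eq_square mult.assoc intro!: mult_left_le mult_le_one)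
    show "expect (P x) (\<lambda>y. a x y * b x y) \<le> \<alpha>"
      unfolding \<alpha>_def using fin assms(3,5,6) by (intro integral_mono integrable_measure_pmf_finite) (auto intro: mult_left_le)
    show "expect ?M (\<lambda>f. S f * T f) \<le> \<sigma> * \<tau> + \<sigma>"
      unfolding S_def T_def \<sigma>_def \<tau>_def using insert assms(3,5,6)
      by (intro expectation_sum_mult_sum_Pi_pmf_le) auto
    show "expect ?M (\<lambda>f. (S f)\<^sup>2 * T f) \<le> expect ?M (\<lambda>f. (S f)\<^sup>2) * \<tau> + \<sigma> + 2 * \<sigma>\<^sup>2"
      using insert.IH insert.prems by (simp add: S_def T_def \<sigma>_def \<tau>_def)
    show "0 \<le> \<alpha>" "0 \<le> \<beta>" "0 \<le> \<sigma>" "0 \<le> q"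
      using assms(3,5) by (simp_all add: q_def \<alpha>_def \<beta>_def \<sigma>_def sum_nonneg)
  qed
  finally show ?case
    unfolding second sums .
qed simp

section \<open>The collision ratio\<close>

definition collision_ratio :: "('i \<Rightarrow> real) \<Rightarrow> 'i set \<Rightarrow> real" where
  "collision_ratio x I =
     (if (\<Sum>i\<in>I. x i) > 0 then (\<Sum>i\<in>I. (x i)\<^sup>2) / (\<Sum>i\<in>I. x i)\<^sup>2 else 0)"

lemma gamma_tilde_eq_collision_ratio: "gamma_tilde k V opn = collision_ratio (alpha V opn) {1..k}"
  by (simp add: gamma_tilde_def collision_ratio_def beta_def gamma_def)

lemma collision_ratio_scale:
  assumes "0 < s"
  shows "collision_ratio (\<lambda>i. x i / s) I = collision_ratio x I"
  using assms
  by (simp add: collision_ratio_def sum_divide_distrib[symmetric] power_divide zero_less_divide_iff)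

lemma collision_ratio_nonneg: "0 \<le> collision_ratio x I"
  by (simp add: collision_ratio_def sum_nonneg)

lemma inverse_square_ge_tangent:
  fixes y c :: real
  assumes "0 < y" "0 < c"
  shows "3 / c\<^sup>2 - 2 * y / c ^ 3 \<le> 1 / y\<^sup>2"
proof -
  have "0 \<le> (c - y)\<^sup>2 * (c + 2 * y)"
    using assms by simp
  also have "(c - y)\<^sup>2 * (c + 2 * y) = c ^ 3 * y\<^sup>2 * (1 / y\<^sup>2 - (3 / c\<^sup>2 - 2 * y / c ^ 3))"
    using assms by (simp add: field_simps power2_eq_square power3_eq_cube)
  finally have "0 \<le> c ^ 3 * y\<^sup>2 * (1 / y\<^sup>2 - (3 / c\<^sup>2 - 2 * y / c ^ 3))" .
  moreover have "0 < c ^ 3 * y\<^sup>2"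
    using assms by simp
  ultimately show ?thesis
    by (simp add: zero_le_mult_iff)
qed

lemma collision_ratio_ge_tangent:
  assumes "\<And>i. i \<in> I \<Longrightarrow> 0 \<le> x i" "0 < c"
  shows "3 / c\<^sup>2 * (\<Sum>i\<in>I. (x i)\<^sup>2) - 2 / c ^ 3 * ((\<Sum>i\<in>I. (x i)\<^sup>2) * (\<Sum>i\<in>I. x i))
    \<le> collision_ratio x I"
proof (cases "(\<Sum>i\<in>I. x i) > 0")
  case True
  have "(\<Sum>i\<in>I. (x i)\<^sup>2) * (3 / c\<^sup>2 - 2 * (\<Sum>i\<in>I. x i) / c ^ 3)
      \<le> (\<Sum>i\<in>I. (x i)\<^sup>2) * (1 / (\<Sum>i\<in>I. x i)\<^sup>2)"
    using True assms by (intro mult_left_mono inverse_square_ge_tangent sum_nonneg) auto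
  then show ?thesis
    using True by (simp add: collision_ratio_def algebra_simps)
next
  case False
  moreover have "0 \<le> (\<Sum>i\<in>I. x i)"
    using assms(1) by (simp add: sum_nonneg)
  ultimately have "(\<Sum>i\<in>I. x i) = 0"
    by linarith
  then have "(\<Sum>i\<in>I. (x i)\<^sup>2) = 0"
    using assms(1) by (cases "finite I") (simp_all add: sum_nonneg_eq_0_iff)
  then show ?thesis
    by (simp add: collision_ratio_def)
qed

lemma weighted_chebyshev_sum:
  fixes x w :: "'i \<Rightarrow> real"
  assumes "\<And>i. i \<in> I \<Longrightarrow> 0 \<le> x i"
    and "\<And>i j. i \<in> I \<Longrightarrow> j \<in> I \<Longrightarrow> 0 \<le> (x i - x j) * (w i - w j)"
  shows "(\<Sum>i\<in>I. (x i)\<^sup>2) * (\<Sum>i\<in>I. x i * w i) \<le> (\<Sum>i\<in>I. x i) * (\<Sum>i\<in>I. (x i)\<^sup>2 * w i)"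
proof -
  define D where "D = (\<Sum>i\<in>I. x i)"
  define C where "C = (\<Sum>i\<in>I. (x i)\<^sup>2)"
  define P where "P = (\<Sum>i\<in>I. (x i)\<^sup>2 * w i)"
  define Q where "Q = (\<Sum>i\<in>I. x i * w i)"
  have row: "(\<Sum>j\<in>I. x i * x j * ((x i - x j) * (w i - w j)))
      = (x i)\<^sup>2 * w i * D - (x i)\<^sup>2 * Q - x i * w i * C + x i * P" for i
    by (simp add: D_def Q_def C_def P_def sum_distrib_left sum_subtractf sum.distrib[symmetric]
        algebra_simps power2_eq_square)
  have "(\<Sum>i\<in>I. \<Sum>j\<in>I. x i * x j * ((x i - x j) * (w i - w j))) = 2 * (D * P - C * Q)"
    unfolding row
    by (simp add: sum.distrib sum_subtractf sum_distrib_right[symmetric] flip: P_def C_def Q_def D_def)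
  moreover have "0 \<le> (\<Sum>i\<in>I. \<Sum>j\<in>I. x i * x j * ((x i - x j) * (w i - w j)))"
    using assms by (intro sum_nonneg) (simp add: mult_nonneg_nonneg)
  ultimately show ?thesis
    by (simp add: C_def Q_def D_def P_def)
qed

lemma weighted_chebyshev_cauchy_schwarz:
  fixes x w :: "'i \<Rightarrow> real"
  assumes "\<And>i. i \<in> I \<Longrightarrow> 0 \<le> x i" "\<And>i. i \<in> I \<Longrightarrow> 0 \<le> w i"
    and "\<And>i j. i \<in> I \<Longrightarrow> j \<in> I \<Longrightarrow> 0 \<le> (x i - x j) * (w i - w j)"
  shows "(\<Sum>i\<in>I. (x i)\<^sup>2) * (\<Sum>i\<in>I. x i * w i)\<^sup>2 \<le> (\<Sum>i\<in>I. x i)\<^sup>2 * (\<Sum>i\<in>I. (x i * w i)\<^sup>2)"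
proof -
  define D where "D = (\<Sum>i\<in>I. x i)"
  define C where "C = (\<Sum>i\<in>I. (x i)\<^sup>2)"
  define P where "P = (\<Sum>i\<in>I. (x i)\<^sup>2 * w i)"
  define Q where "Q = (\<Sum>i\<in>I. x i * w i)"
  define R where "R = (\<Sum>i\<in>I. (x i * w i)\<^sup>2)"
  have chebyshev: "C * Q \<le> D * P"
    unfolding C_def Q_def D_def P_def using assms(1,3) by (rule weighted_chebyshev_sum)
  have cauchy_schwarz: "P\<^sup>2 \<le> C * R"
    using Cauchy_Schwarz_ineq_sum[of x "\<lambda>i. x i * w i" I]
    by (simp add: P_def C_def R_def power2_eq_square mult.assoc)
  have nonneg: "0 \<le> C" "0 \<le> Q" "0 \<le> R"
    unfolding C_def Q_def R_def using assms by (auto intro!: sum_nonneg)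
  have "C * (C * Q\<^sup>2) = (C * Q)\<^sup>2"
    by (simp add: power2_eq_square)
  also have "\<dots> \<le> (D * P)\<^sup>2"
    using chebyshev nonneg by (intro power_mono) auto
  also have "\<dots> \<le> D\<^sup>2 * (C * R)"
    using cauchy_schwarz by (simp add: power_mult_distrib mult_left_mono)
  also have "\<dots> = C * (D\<^sup>2 * R)"
    by simp
  finally have "C * (C * Q\<^sup>2) \<le> C * (D\<^sup>2 * R)" .
  then have "C * Q\<^sup>2 \<le> D\<^sup>2 * R"
    using nonneg by (cases "C = 0") auto
  then show ?thesis
    by (simp add: C_def D_def Q_def R_def)
qed

lemma collision_ratio_le_reweighted:
  fixes x w :: "'i \<Rightarrow> real"
  assumes "\<And>i. i \<in> I \<Longrightarrow> 0 \<le> x i" "\<And>i. i \<in> I \<Longrightarrow> 0 \<le> w i"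
    and "\<And>i j. i \<in> I \<Longrightarrow> j \<in> I \<Longrightarrow> 0 \<le> (x i - x j) * (w i - w j)"
    and "0 < (\<Sum>i\<in>I. x i * w i)"
  shows "collision_ratio x I \<le> collision_ratio (\<lambda>i. x i * w i) I"
proof (cases "0 < (\<Sum>i\<in>I. x i)")
  case True
  have "(\<Sum>i\<in>I. (x i)\<^sup>2) * (\<Sum>i\<in>I. x i * w i)\<^sup>2 \<le> (\<Sum>i\<in>I. x i)\<^sup>2 * (\<Sum>i\<in>I. (x i * w i)\<^sup>2)"
    using assms(1-3) by (rule weighted_chebyshev_cauchy_schwarz)
  then show ?thesis
    using True assms(4) by (simp add: collision_ratio_def divide_simps mult.commute)
next
  case False
  then show ?thesis
    by (simp add: collision_ratio_def[of x] collision_ratio_nonneg)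
qed

lemma expectation_collision_ratio_ge:
  fixes M :: "'a pmf" and X :: "'i \<Rightarrow> 'a \<Rightarrow> real"
  assumes "finite (set_pmf M)" "\<And>i \<omega>. i \<in> I \<Longrightarrow> 0 \<le> X i \<omega>"
    and c: "c = (\<Sum>i\<in>I. expect M (X i))" "0 < c"
    and third_moment: "\<And>i. i \<in> I \<Longrightarrow> expect M (\<lambda>\<omega>. (X i \<omega>)\<^sup>2 * (\<Sum>j\<in>I. X j \<omega>))
      \<le> expect M (\<lambda>\<omega>. (X i \<omega>)\<^sup>2) * c + expect M (X i) + 2 * (expect M (X i))\<^sup>2"
  shows "(\<Sum>i\<in>I. expect M (\<lambda>\<omega>. (X i \<omega>)\<^sup>2)) / c\<^sup>2 - 2 / c\<^sup>2 - 4 * (\<Sum>i\<in>I. (expect M (X i))\<^sup>2) / c ^ 3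
    \<le> expect M (\<lambda>\<omega>. collision_ratio (\<lambda>i. X i \<omega>) I)"
proof -
  define A where "A \<omega> = (\<Sum>i\<in>I. (X i \<omega>)\<^sup>2)" for \<omega>
  define Y where "Y \<omega> = (\<Sum>i\<in>I. X i \<omega>)" for \<omega>
  define Q where "Q = (\<Sum>i\<in>I. expect M (\<lambda>\<omega>. (X i \<omega>)\<^sup>2))"
  define R where "R = (\<Sum>i\<in>I. (expect M (X i))\<^sup>2)"
  have int: "integrable M f" for f :: "'a \<Rightarrow> real"
    using assms(1) by (rule integrable_measure_pmf_finite)
  have EA: "expect M A = Q"
    unfolding A_def Q_def by (simp add: int)
  have "expect M (\<lambda>\<omega>. A \<omega> * Y \<omega>) = (\<Sum>i\<in>I. expect M (\<lambda>\<omega>. (X i \<omega>)\<^sup>2 * Y \<omega>))"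
    unfolding A_def sum_distrib_right by (simp add: int)
  also have "\<dots> \<le> (\<Sum>i\<in>I. expect M (\<lambda>\<omega>. (X i \<omega>)\<^sup>2) * c + expect M (X i) + 2 * (expect M (X i))\<^sup>2)"
    unfolding Y_def by (intro sum_mono third_moment)
  also have "\<dots> = Q * c + c + 2 * R"
    by (simp add: Q_def R_def sum.distrib sum_distrib_left sum_distrib_right flip: c(1))
  finally have EAY: "expect M (\<lambda>\<omega>. A \<omega> * Y \<omega>) \<le> Q * c + c + 2 * R" .
  have "Q / c\<^sup>2 - 2 / c\<^sup>2 - 4 * R / c ^ 3 = 3 / c\<^sup>2 * Q - 2 / c ^ 3 * (Q * c + c + 2 * R)"
    using c(2) by (simp add: field_simps power2_eq_square power3_eq_cube)
  also have "\<dots> \<le> 3 / c\<^sup>2 * expect M A - 2 / c ^ 3 * expect M (\<lambda>\<omega>. A \<omega> * Y \<omega>)"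
    using mult_left_mono[OF EAY, of "2 / c ^ 3"] EA c(2) by simp
  also have "\<dots> = expect M (\<lambda>\<omega>. 3 / c\<^sup>2 * A \<omega> - 2 / c ^ 3 * (A \<omega> * Y \<omega>))"
    by (simp add: int)
  also have "\<dots> \<le> expect M (\<lambda>\<omega>. collision_ratio (\<lambda>i. X i \<omega>) I)"
    unfolding A_def Y_def using assms(2) c(2)
    by (intro integral_mono int collision_ratio_ge_tangent) auto
  finally show ?thesis
    by (simp add: Q_def R_def)
qed

section \<open>One round of gossip USD\<close>

definition opinion_count :: "nat set \<Rightarrow> (nat \<Rightarrow> nat option) \<Rightarrow> nat option \<Rightarrow> real" where
  "opinion_count V opn s = real (card {u\<in>V. opn u = s})"

definition usd_round :: "nat set \<Rightarrow> (nat \<Rightarrow> nat option) \<Rightarrow> (nat \<Rightarrow> nat) \<Rightarrow> nat \<Rightarrow> nat option" where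
  "usd_round V opn f u = (if u \<in> V then usd_update (opn u) (opn (f u)) else opn u)"

lemma gossip_step_eq_map_usd_round:
  "gossip_step V opn = map_pmf (usd_round V opn) (Pi_pmf V 0 (\<lambda>_. pmf_of_set V))"
  by (simp add: gossip_step_def usd_round_def[abs_def])

lemma opinion_count_eq_sum:
  assumes "finite V"
  shows "opinion_count V opn s = (\<Sum>u\<in>V. of_bool (opn u = s))"
  using assms by (simp add: opinion_count_def Collect_conj_eq Int_commute)

lemma alpha_eq_opinion_count: "alpha V opn = (\<lambda>i. opinion_count V opn (Some i) / real (card V))"
  by (simp add: alpha_def opinion_count_def fun_eq_iff)

lemma opinion_count_usd_round:
  assumes "finite V"
  shows "opinion_count V (usd_round V opn f) s = (\<Sum>v\<in>V. of_bool (usd_update (opn v) (opn (f v)) = s))"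
  using assms by (simp add: opinion_count_eq_sum usd_round_def)

lemma decided_plus_undecided:
  assumes "finite V" "valid_config k V opn"
  shows "(\<Sum>i\<in>{1..k}. opinion_count V opn (Some i)) + opinion_count V opn None = real (card V)"
proof -
  have one: "(\<Sum>i\<in>{1..k}. of_bool (opn u = Some i)) + of_bool (opn u = None) = (1 :: real)"
    if "u \<in> V" for u
    using assms(2) that by (auto simp: valid_config_def)
  have "(\<Sum>i\<in>{1..k}. opinion_count V opn (Some i)) + opinion_count V opn None
      = (\<Sum>u\<in>V. (\<Sum>i\<in>{1..k}. of_bool (opn u = Some i)) + of_bool (opn u = None))"
    using assms(1) by (simp only: opinion_count_eq_sum sum.swap[of _ "{1..k}"] sum.distrib)
  also have "\<dots> = real (card V)"
    using one by simp
  finally show ?thesis .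
qed

lemma sum_over_two_opinions:
  assumes "finite V" "\<And>s. s \<noteq> Some i \<Longrightarrow> s \<noteq> None \<Longrightarrow> h s = 0"
  shows "(\<Sum>v\<in>V. h (opn v)) =
    opinion_count V opn (Some i) * h (Some i) + opinion_count V opn None * h None"
proof -
  have "h (opn v) = of_bool (opn v = Some i) * h (Some i) + of_bool (opn v = None) * h None" for v
    using assms(2) by (cases "opn v = Some i"; cases "opn v = None") auto
  then show ?thesis
    using assms(1) by (simp add: opinion_count_eq_sum sum.distrib sum_distrib_right)
qed

lemma usd_update_eq_Some:
  "usd_update s s' = Some i \<longleftrightarrow> s = Some i \<and> (s' = Some i \<or> s' = None) \<or> s = None \<and> s' = Some i"
  by (cases s; cases s') auto

lemma expectation_adoption:
  assumes "finite V" "V \<noteq> {}"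
  shows "expect (pmf_of_set V) (\<lambda>w. of_bool (usd_update s (opn w) = Some i)) =
    (if s = Some i then (opinion_count V opn (Some i) + opinion_count V opn None) / real (card V)
     else if s = None then opinion_count V opn (Some i) / real (card V) else 0)"
proof -
  have "of_bool (usd_update s (opn w) = Some i) =
      (if s = Some i then of_bool (opn w = Some i) + of_bool (opn w = None)
       else if s = None then of_bool (opn w = Some i) else (0 :: real))" for w
    by (cases "opn w = Some i"; cases "opn w = None") (auto simp: usd_update_eq_Some)
  then show ?thesis
    using assms by (cases "s = Some i"; cases "s = None")
      (auto simp: integral_pmf_of_set opinion_count_eq_sum sum.distrib add_divide_distrib)
qed

text \<open>With \<open>x\<close> vertices of opinion \<open>i\<close>, \<open>u\<close> undecided ones and \<open>n = |V|\<close>, a vertex of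
  opinion \<open>i\<close> keeps it with probability \<open>(u + x) / n\<close> and an undecided vertex adopts \<open>i\<close>
  with probability \<open>x / n\<close>; these are the mean and variance of the resulting count.\<close>

definition usd_mean :: "real \<Rightarrow> real \<Rightarrow> real \<Rightarrow> real" where
  "usd_mean n u x = x * (2 * u + x) / n"

definition usd_variance :: "real \<Rightarrow> real \<Rightarrow> real \<Rightarrow> real" where
  "usd_variance n u x = x * ((u + x) / n - ((u + x) / n)\<^sup>2) + u * (x / n - (x / n)\<^sup>2)"

lemma usd_round_moments:
  fixes V :: "nat set" and opn :: "nat \<Rightarrow> nat option"
  assumes "finite V" "V \<noteq> {}"
  defines "M \<equiv> Pi_pmf V 0 (\<lambda>_. pmf_of_set V)" and "X \<equiv> \<lambda>i f. opinion_count V (usd_round V opn f) (Some i)"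
    and "n \<equiv> real (card V)" and "u \<equiv> opinion_count V opn None"
  shows "expect M (X i) = usd_mean n u (opinion_count V opn (Some i))"
    and "expect M (\<lambda>f. (X i f)\<^sup>2) = (usd_mean n u (opinion_count V opn (Some i)))\<^sup>2
           + usd_variance n u (opinion_count V opn (Some i))"
proof -
  define x where "x = opinion_count V opn (Some i)"
  define a :: "nat \<Rightarrow> nat \<Rightarrow> real" where "a v = (\<lambda>w. of_bool (usd_update (opn v) (opn w) = Some i))" for v
  have fin: "finite (set_pmf (pmf_of_set V))"
    using assms(1,2) by simp
  have X_eq: "X i = (\<lambda>f. \<Sum>v\<in>V. a v (f v))"
    using assms(1) by (simp add: X_def a_def opinion_count_usd_round)
  have n_pos: "0 < n"
    using assms(1,2) by (simp add: n_def card_gt_0_iff)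
  define p where "p s = (if s = Some i then (x + u) / n else if s = None then x / n else 0)" for s
  have adoption: "expect (pmf_of_set V) (a v) = p (opn v)" for v
    using assms(1,2) by (simp add: a_def p_def expectation_adoption x_def u_def n_def)
  have sum_adoption: "(\<Sum>v\<in>V. h (expect (pmf_of_set V) (a v))) = x * h ((x + u) / n) + u * h (x / n)"
    if "h 0 = 0" for h :: "real \<Rightarrow> real"
  proof -
    have "h (p s) = 0" if "s \<noteq> Some i" "s \<noteq> None" for s
      using that \<open>h 0 = 0\<close> by (auto simp: p_def)
    from sum_over_two_opinions[OF assms(1), of i "\<lambda>s. h (p s)", OF this]
    show ?thesis
      by (simp add: adoption p_def x_def u_def)
  qed
  have mean: "expect M (X i) = usd_mean n u x"
    using sum_adoption[of "\<lambda>p. p"] n_pos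
    by (simp add: M_def X_eq expectation_sum_Pi_pmf[OF assms(1) fin] usd_mean_def field_simps)
  then show "expect M (X i) = usd_mean n u (opinion_count V opn (Some i))"
    by (simp add: x_def)
  have "expect (pmf_of_set V) (\<lambda>w. (a v w)\<^sup>2) = expect (pmf_of_set V) (a v)" for v
    unfolding a_def by (intro Bochner_Integration.integral_cong) auto
  then have "expect M (\<lambda>f. (X i f)\<^sup>2) = (usd_mean n u x)\<^sup>2 + (\<Sum>v\<in>V. (\<lambda>p. p - p\<^sup>2) (expect (pmf_of_set V) (a v)))"
    using mean by (simp add: M_def X_eq expectation_sum_squared_Pi_pmf[OF assms(1) fin] expectation_sum_Pi_pmf[OF assms(1) fin])
  also have "\<dots> = (usd_mean n u x)\<^sup>2 + usd_variance n u x"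
    by (subst sum_adoption) (simp_all add: usd_variance_def add.commute)
  finally show "expect M (\<lambda>f. (X i f)\<^sup>2) = (usd_mean n u (opinion_count V opn (Some i)))\<^sup>2
           + usd_variance n u (opinion_count V opn (Some i))"
    by (simp add: x_def)
qed

lemma sum_of_bool_Some_le_1:
  fixes z :: "'a option"
  shows "(\<Sum>j\<in>J. of_bool (z = Some j) :: real) \<le> 1"
proof (cases "finite J")
  case True
  then show ?thesis
    by (cases z) (simp_all add: of_bool_def sum.delta)
qed simp

lemma usd_round_third_moment:
  fixes V :: "nat set" and opn :: "nat \<Rightarrow> nat option"
  assumes "finite V" "V \<noteq> {}" "finite J"
  defines "M \<equiv> Pi_pmf V 0 (\<lambda>_. pmf_of_set V)" and "X \<equiv> \<lambda>i f. opinion_count V (usd_round V opn f) (Some i)"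
  shows "expect M (\<lambda>f. (X i f)\<^sup>2 * (\<Sum>j\<in>J. X j f))
    \<le> expect M (\<lambda>f. (X i f)\<^sup>2) * (\<Sum>j\<in>J. expect M (X j)) + expect M (X i) + 2 * (expect M (X i))\<^sup>2"
proof -
  define a :: "nat \<Rightarrow> nat \<Rightarrow> nat \<Rightarrow> real" where
    "a j v = (\<lambda>w. of_bool (usd_update (opn v) (opn w) = Some j))" for j v
  define b where "b v = (\<lambda>w. \<Sum>j\<in>J. a j v w)" for v
  have fin: "finite (set_pmf (pmf_of_set V))"
    using assms(1,2) by simp
  have X_eq: "X j = (\<lambda>f. \<Sum>v\<in>V. a j v (f v))" for j
    using assms(1) by (simp add: X_def a_def opinion_count_usd_round)
  have sum_X: "(\<Sum>j\<in>J. X j f) = (\<Sum>v\<in>V. b v (f v))" for f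
    unfolding X_eq b_def by (rule sum.swap)
  have "expect M (\<lambda>f. (X i f)\<^sup>2 * (\<Sum>j\<in>J. X j f))
      \<le> expect M (\<lambda>f. (X i f)\<^sup>2) * (\<Sum>v\<in>V. expect (pmf_of_set V) (b v))
        + (\<Sum>v\<in>V. expect (pmf_of_set V) (a i v)) + 2 * (\<Sum>v\<in>V. expect (pmf_of_set V) (a i v))\<^sup>2"
    unfolding sum_X unfolding M_def X_eq
    by (rule expectation_sum_squared_mult_sum_Pi_pmf_le[OF assms(1) fin])
      (simp_all add: a_def b_def sum_nonneg sum_of_bool_Some_le_1)
  also have "(\<Sum>v\<in>V. expect (pmf_of_set V) (b v)) = (\<Sum>j\<in>J. expect M (X j))"
    using fin by (simp add: M_def X_eq b_def expectation_sum_Pi_pmf[OF assms(1)] sum.swap[of _ J] integrable_measure_pmf_finite)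
  also have "(\<Sum>v\<in>V. expect (pmf_of_set V) (a i v)) = expect M (X i)"
    using fin by (simp add: M_def X_eq expectation_sum_Pi_pmf[OF assms(1)])
  finally show ?thesis .
qed

section \<open>The drift inequality\<close>

lemma near_half_bounds:
  fixes \<beta> \<gamma> :: real
  assumes "1/2 - 1/1000 \<le> \<beta>" "\<beta> * (2 * \<beta> - 1) - \<gamma> \<le> 1/1000" "0 \<le> \<gamma>" "\<gamma> \<le> 1/1000"
  shows "\<beta> \<le> 502/1000" "49/100 \<le> \<gamma> + 2 * (1 - \<beta>) * \<beta>" "\<gamma> + 2 * (1 - \<beta>) * \<beta> \<le> 51/100"
proof -
  show \<beta>_upper: "\<beta> \<le> 502/1000"
  proof (rule ccontr)
    assume "\<not> \<beta> \<le> 502/1000"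
    then have "502/1000 * (4/1000) < \<beta> * (2 * \<beta> - 1)"
      by (intro mult_strict_mono) auto
    then show False
      using assms(2,4) by simp
  qed
  have "\<bar>\<beta> - 1/2\<bar> \<le> 1/100"
    unfolding abs_le_iff using assms(1) \<beta>_upper by linarith
  then have "\<bar>\<beta> - 1/2\<bar>\<^sup>2 \<le> (1/100)\<^sup>2"
    by (intro power_mono) auto
  then have "(\<beta> - 1/2)\<^sup>2 \<le> 1/10000"
    by (simp add: power_divide)
  moreover have "2 * (1 - \<beta>) * \<beta> = 1/2 - 2 * (\<beta> - 1/2)\<^sup>2"
    by (simp add: power2_eq_square algebra_simps)
  moreover have "0 \<le> (\<beta> - 1/2)\<^sup>2"
    by simp
  ultimately show "49/100 \<le> \<gamma> + 2 * (1 - \<beta>) * \<beta>" "\<gamma> + 2 * (1 - \<beta>) * \<beta> \<le> 51/100"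
    using assms(3,4) by linarith+
qed

lemma usd_drift_numeric:
  fixes n \<beta> \<gamma> s v m :: real
  assumes "0 < n" "1/2 - 1/1000 \<le> \<beta>" "\<beta> * (2 * \<beta> - 1) - \<gamma> \<le> 1/1000"
    and "0 \<le> \<gamma>" "\<gamma> \<le> 1/1000" "\<beta> / n \<le> \<gamma>"
    and "s = \<gamma> + 2 * (1 - \<beta>) * \<beta>" "(1 - \<beta>) * (\<beta>\<^sup>2 + \<beta> - 2 * \<gamma>) \<le> v"
    and "0 \<le> m" "m \<le> 4 * \<gamma>"
  shows "1 / (12 * n) \<le> v / (n * s\<^sup>2) - 2 / (n\<^sup>2 * s\<^sup>2) - 4 * m / (n * s ^ 3)"
proof -
  note bounds = near_half_bounds[OF assms(2-5)]
  have s_bounds: "49/100 \<le> s" "s \<le> 51/100"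
    using bounds(2,3) assms(7) by simp_all
  have "(499/1000)\<^sup>2 \<le> \<beta>\<^sup>2"
    using assms(2) by (intro power_mono) auto
  then have "7/10 \<le> \<beta>\<^sup>2 + \<beta> - 2 * \<gamma>"
    using assms(2,5) by (simp add: power_divide)
  then have "49/100 * (7/10) \<le> (1 - \<beta>) * (\<beta>\<^sup>2 + \<beta> - 2 * \<gamma>)"
    using bounds(1) by (intro mult_mono) auto
  moreover have "2 * \<gamma> / \<beta> \<le> 1/100"
    using assms(2,5) by (simp add: divide_simps)
  ultimately have v_lower: "3/10 \<le> v - 2 * \<gamma> / \<beta>"
    using assms(8) by linarith
  have "2 / (n\<^sup>2 * s\<^sup>2) = (1 / n) * (2 / (n * s\<^sup>2))"
    by (simp add: power2_eq_square)
  also have "\<dots> \<le> (\<gamma> / \<beta>) * (2 / (n * s\<^sup>2))"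
    using assms(1,2,6) s_bounds by (intro mult_right_mono) (auto simp: divide_simps mult.commute)
  finally have "2 / (n\<^sup>2 * s\<^sup>2) \<le> (2 * \<gamma> / \<beta>) / (n * s\<^sup>2)"
    by (simp add: mult.commute)
  moreover have "(3/10) / (n * (51/100)\<^sup>2) \<le> (v - 2 * \<gamma> / \<beta>) / (n * s\<^sup>2)"
    using assms(1) s_bounds v_lower by (intro frac_le mult_left_mono power_mono) auto
  moreover have "4 * m / (n * s ^ 3) \<le> (4/250) / (n * (49/100) ^ 3)"
    using assms(1,5,9,10) s_bounds by (intro frac_le mult_left_mono power_mono) auto
  moreover have "1 / (12 * n) \<le> (3/10) / (n * (51/100)\<^sup>2) - (4/250) / (n * (49/100) ^ 3)"
    using assms(1) by (simp add: divide_simps)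
  ultimately show ?thesis
    by (simp add: diff_divide_distrib)
qed

lemma usd_variance_lower_bound:
  assumes "0 \<le> x" "x \<le> D" "0 \<le> u" "n = u + D" "0 < n"
  shows "u * (x * D + n * x - 2 * x\<^sup>2) \<le> n\<^sup>2 * usd_variance n u x"
proof -
  have "u * (x * D + n * x - 2 * x\<^sup>2) \<le> u * (x * D + n * x - 2 * x\<^sup>2) + x\<^sup>2 * (D - x)"
    using assms(2) by simp
  also have "\<dots> = x * ((u + x) * n - (u + x)\<^sup>2) + u * (x * n - x\<^sup>2)"
    by (simp add: assms(4) algebra_simps power2_eq_square)
  also have "\<dots> = n\<^sup>2 * usd_variance n u x"
    using assms(5) by (simp add: usd_variance_def field_simps power2_eq_square)
  finally show ?thesis .
qed

context
  fixes x :: "'i \<Rightarrow> real" and u n :: real and I :: "'i set"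
  assumes finite_I: "finite I" and x_nonneg: "\<And>i. i \<in> I \<Longrightarrow> 0 \<le> x i" and u_nonneg: "0 \<le> u"
    and n_eq: "n = u + (\<Sum>i\<in>I. x i)" and n_pos: "0 < n"
begin

lemma sum_usd_mean: "(\<Sum>i\<in>I. usd_mean n u (x i)) = ((\<Sum>i\<in>I. (x i)\<^sup>2) + 2 * u * (\<Sum>i\<in>I. x i)) / n"
proof -
  have "(\<Sum>i\<in>I. usd_mean n u (x i)) = (\<Sum>i\<in>I. (x i)\<^sup>2 + 2 * u * x i) / n"
    by (simp add: usd_mean_def sum_divide_distrib algebra_simps power2_eq_square)
  also have "\<dots> = ((\<Sum>i\<in>I. (x i)\<^sup>2) + 2 * u * (\<Sum>i\<in>I. x i)) / n"
    by (simp add: sum.distrib sum_distrib_left)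
  finally show ?thesis .
qed

lemma collision_ratio_le_usd_means:
  assumes "0 < (\<Sum>i\<in>I. usd_mean n u (x i))"
  shows "collision_ratio x I \<le> (\<Sum>i\<in>I. (usd_mean n u (x i))\<^sup>2) / (\<Sum>i\<in>I. usd_mean n u (x i))\<^sup>2"
proof -
  define w where "w i = (2 * u + x i) / n" for i
  have mean_eq: "usd_mean n u (x i) = x i * w i" for i
    by (simp add: usd_mean_def w_def)
  have "collision_ratio x I \<le> collision_ratio (\<lambda>i. x i * w i) I"
  proof (rule collision_ratio_le_reweighted)
    show "0 \<le> w i" if "i \<in> I" for i
      using that x_nonneg u_nonneg n_pos by (simp add: w_def)
    show "0 \<le> (x i - x j) * (w i - w j)" for i j
      using n_pos by (simp add: w_def diff_divide_distrib[symmetric] flip: power2_eq_square)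
    show "0 < (\<Sum>i\<in>I. x i * w i)"
      using assms by (simp add: mean_eq)
  qed (use x_nonneg in auto)
  also have "\<dots> = (\<Sum>i\<in>I. (usd_mean n u (x i))\<^sup>2) / (\<Sum>i\<in>I. usd_mean n u (x i))\<^sup>2"
    using assms by (simp add: collision_ratio_def mean_eq)
  finally show ?thesis .
qed

lemma sum_usd_mean_squares_le: "(\<Sum>i\<in>I. (usd_mean n u (x i))\<^sup>2) \<le> 4 * (\<Sum>i\<in>I. (x i)\<^sup>2)"
  unfolding sum_distrib_left
proof (rule sum_mono)
  fix i assume "i \<in> I"
  then have "x i \<le> (\<Sum>i\<in>I. x i)"
    using x_nonneg finite_I by (intro member_le_sum) auto
  then have "(2 * u + x i) / n \<le> 2"
    using x_nonneg[OF \<open>i \<in> I\<close>] u_nonneg n_pos by (simp add: n_eq divide_simps)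
  then have "x i * ((2 * u + x i) / n) \<le> 2 * x i" "0 \<le> x i * ((2 * u + x i) / n)"
    using x_nonneg[OF \<open>i \<in> I\<close>] u_nonneg n_pos mult_left_mono[of "(2 * u + x i) / n" 2 "x i"]
    by (simp_all add: mult.commute)
  then show "(usd_mean n u (x i))\<^sup>2 \<le> 4 * (x i)\<^sup>2"
    using power_mono[of "x i * ((2 * u + x i) / n)" "2 * x i" 2] by (simp add: usd_mean_def power_mult_distrib)
qed

lemma sum_usd_variance_ge:
  "u * ((\<Sum>i\<in>I. x i)\<^sup>2 + n * (\<Sum>i\<in>I. x i) - 2 * (\<Sum>i\<in>I. (x i)\<^sup>2))
    \<le> n\<^sup>2 * (\<Sum>i\<in>I. usd_variance n u (x i))"
proof -
  define D where "D = (\<Sum>i\<in>I. x i)"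
  have "u * (D\<^sup>2 + n * D - 2 * (\<Sum>i\<in>I. (x i)\<^sup>2))
      = u * ((\<Sum>i\<in>I. x i) * D + n * (\<Sum>i\<in>I. x i) - 2 * (\<Sum>i\<in>I. (x i)\<^sup>2))"
    by (simp add: D_def power2_eq_square)
  also have "\<dots> = (\<Sum>i\<in>I. u * (x i * D + n * x i - 2 * (x i)\<^sup>2))"
    by (simp add: sum_distrib_left sum_distrib_right sum_subtractf sum.distrib algebra_simps)
  also have "\<dots> \<le> (\<Sum>i\<in>I. n\<^sup>2 * usd_variance n u (x i))"
  proof (intro sum_mono usd_variance_lower_bound)
    show "x i \<le> D" if "i \<in> I" for i
      unfolding D_def using that x_nonneg finite_I by (intro member_le_sum) auto
  qed (use x_nonneg u_nonneg n_pos in \<open>simp_all add: n_eq D_def\<close>)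
  finally show ?thesis
    by (simp add: D_def sum_distrib_left)
qed

text \<open>The hypotheses on the counts below are \<open>\<beta> \<ge> 1/2 - \<epsilon>\<close>, \<open>\<psi> \<le> \<epsilon>\<close> and \<open>\<gamma> \<le> \<epsilon>\<close>
  for \<open>\<epsilon> = 1/1000\<close>; \<open>x i \<le> (x i)\<^sup>2\<close> holds because the counts are natural numbers.\<close>

lemma usd_variance_gain_ge:
  assumes x_le_square: "\<And>i. i \<in> I \<Longrightarrow> x i \<le> (x i)\<^sup>2"
    and beta: "1/2 - 1/1000 \<le> (\<Sum>i\<in>I. x i) / n"
    and psi: "(\<Sum>i\<in>I. x i) / n * (2 * ((\<Sum>i\<in>I. x i) / n) - 1) - (\<Sum>i\<in>I. (x i)\<^sup>2) / n\<^sup>2 \<le> 1/1000"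
    and gamma: "(\<Sum>i\<in>I. (x i)\<^sup>2) / n\<^sup>2 \<le> 1/1000"
  defines "c \<equiv> (\<Sum>i\<in>I. usd_mean n u (x i))"
  shows "0 < c" and "1 / (12 * n)
    \<le> (\<Sum>i\<in>I. usd_variance n u (x i)) / c\<^sup>2 - 2 / c\<^sup>2 - 4 * (\<Sum>i\<in>I. (usd_mean n u (x i))\<^sup>2) / c ^ 3"
proof -
  define D where "D = (\<Sum>i\<in>I. x i)"
  define C where "C = (\<Sum>i\<in>I. (x i)\<^sup>2)"
  define M2 where "M2 = (\<Sum>i\<in>I. (usd_mean n u (x i))\<^sup>2)"
  define Vt where "Vt = (\<Sum>i\<in>I. usd_variance n u (x i))"
  have u_eq: "u = n - D"
    by (simp add: n_eq D_def)
  have "0 < D / n"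
    using beta unfolding D_def by linarith
  then have D_pos: "0 < D"
    using n_pos by (simp add: zero_less_divide_iff)
  have D_le_C: "D \<le> C"
    unfolding D_def C_def using x_le_square by (rule sum_mono)
  have c_eq: "c = (C + 2 * u * D) / n"
    by (simp add: c_def sum_usd_mean C_def D_def)
  show c_pos: "0 < c"
    using c_eq n_pos D_pos D_le_C u_nonneg by (simp add: add_pos_nonneg)
  have "1 / (12 * n) \<le> (Vt / n) / (n * (c / n)\<^sup>2) - 2 / (n\<^sup>2 * (c / n)\<^sup>2) - 4 * (M2 / n\<^sup>2) / (n * (c / n) ^ 3)"
  proof (rule usd_drift_numeric[OF n_pos, where \<beta> = "D / n" and \<gamma> = "C / n\<^sup>2"])
    show "1/2 - 1/1000 \<le> D / n" "D / n * (2 * (D / n) - 1) - C / n\<^sup>2 \<le> 1/1000" "C / n\<^sup>2 \<le> 1/1000"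
      using beta psi gamma by (simp_all add: D_def C_def)
    show "0 \<le> C / n\<^sup>2" "0 \<le> M2 / n\<^sup>2"
      by (simp_all add: C_def M2_def sum_nonneg)
    show "D / n / n \<le> C / n\<^sup>2"
      using D_le_C by (simp add: power2_eq_square divide_right_mono)
    show "c / n = C / n\<^sup>2 + 2 * (1 - D / n) * (D / n)"
      using n_pos by (simp add: c_eq u_eq field_simps power2_eq_square)
    show "M2 / n\<^sup>2 \<le> 4 * (C / n\<^sup>2)"
      using sum_usd_mean_squares_le by (simp add: M2_def C_def divide_right_mono)
    have "(1 - D / n) * ((D / n)\<^sup>2 + D / n - 2 * (C / n\<^sup>2)) = u * (D\<^sup>2 + n * D - 2 * C) / n ^ 3"
      using n_pos by (simp add: u_eq field_simps power2_eq_square power3_eq_cube)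
    also have "\<dots> \<le> n\<^sup>2 * Vt / n ^ 3"
      using sum_usd_variance_ge n_pos by (simp add: D_def C_def Vt_def divide_right_mono)
    also have "\<dots> = Vt / n"
      using n_pos by (simp add: power2_eq_square power3_eq_cube)
    finally show "(1 - D / n) * ((D / n)\<^sup>2 + D / n - 2 * (C / n\<^sup>2)) \<le> Vt / n" .
  qed
  also have "(Vt / n) / (n * (c / n)\<^sup>2) - 2 / (n\<^sup>2 * (c / n)\<^sup>2) - 4 * (M2 / n\<^sup>2) / (n * (c / n) ^ 3)
      = Vt / c\<^sup>2 - 2 / c\<^sup>2 - 4 * M2 / c ^ 3"
    using n_pos c_pos by (simp add: field_simps power2_eq_square power3_eq_cube)
  finally show "1 / (12 * n)
    \<le> (\<Sum>i\<in>I. usd_variance n u (x i)) / c\<^sup>2 - 2 / c\<^sup>2 - 4 * (\<Sum>i\<in>I. (usd_mean n u (x i))\<^sup>2) / c ^ 3"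
    by (simp only: M2_def Vt_def)
qed

lemma usd_drift_from_moments:
  assumes "\<And>i. i \<in> I \<Longrightarrow> x i \<le> (x i)\<^sup>2"
    and "1/2 - 1/1000 \<le> (\<Sum>i\<in>I. x i) / n"
    and "(\<Sum>i\<in>I. x i) / n * (2 * ((\<Sum>i\<in>I. x i) / n) - 1) - (\<Sum>i\<in>I. (x i)\<^sup>2) / n\<^sup>2 \<le> 1/1000"
    and "(\<Sum>i\<in>I. (x i)\<^sup>2) / n\<^sup>2 \<le> 1/1000"
  defines "c \<equiv> (\<Sum>i\<in>I. usd_mean n u (x i))"
  shows "0 < c" and "collision_ratio x I + 1 / (12 * n)
    \<le> (\<Sum>i\<in>I. (usd_mean n u (x i))\<^sup>2 + usd_variance n u (x i)) / c\<^sup>2 - 2 / c\<^sup>2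
       - 4 * (\<Sum>i\<in>I. (usd_mean n u (x i))\<^sup>2) / c ^ 3"
proof -
  note gain = usd_variance_gain_ge[OF assms(1-4), folded c_def]
  show "0 < c"
    by (rule gain(1))
  then show "collision_ratio x I + 1 / (12 * n)
    \<le> (\<Sum>i\<in>I. (usd_mean n u (x i))\<^sup>2 + usd_variance n u (x i)) / c\<^sup>2 - 2 / c\<^sup>2
       - 4 * (\<Sum>i\<in>I. (usd_mean n u (x i))\<^sup>2) / c ^ 3"
    using gain(2) collision_ratio_le_usd_means
    by (simp add: sum.distrib add_divide_distrib c_def)
qed

end

lemma expectation_gamma_tilde_gossip_step_ge:
  fixes V :: "nat set" and opn :: "nat \<Rightarrow> nat option" and k :: nat
  assumes "finite V" "V \<noteq> {}"
  defines "n \<equiv> real (card V)" and "u \<equiv> opinion_count V opn None"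
    and "x \<equiv> \<lambda>i. opinion_count V opn (Some i)"
    and "c \<equiv> (\<Sum>i\<in>{1..k}. usd_mean (real (card V)) (opinion_count V opn None) (opinion_count V opn (Some i)))"
  assumes "0 < c"
  shows "(\<Sum>i\<in>{1..k}. (usd_mean n u (x i))\<^sup>2 + usd_variance n u (x i)) / c\<^sup>2 - 2 / c\<^sup>2
      - 4 * (\<Sum>i\<in>{1..k}. (usd_mean n u (x i))\<^sup>2) / c ^ 3
    \<le> expect (gossip_step V opn) (gamma_tilde k V)"
proof -
  define M where "M = Pi_pmf V 0 (\<lambda>_. pmf_of_set V)"
  define X where "X i f = opinion_count V (usd_round V opn f) (Some i)" for i f
  have moments: "expect M (X i) = usd_mean n u (x i)"
      "expect M (\<lambda>f. (X i f)\<^sup>2) = (usd_mean n u (x i))\<^sup>2 + usd_variance n u (x i)" for i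
    unfolding M_def X_def n_def u_def x_def using assms(1,2) by (rule usd_round_moments)+
  have c_eq: "c = (\<Sum>i\<in>{1..k}. expect M (X i))"
    by (simp add: c_def moments n_def u_def x_def)
  have "(\<Sum>i\<in>{1..k}. (usd_mean n u (x i))\<^sup>2 + usd_variance n u (x i)) / c\<^sup>2 - 2 / c\<^sup>2
      - 4 * (\<Sum>i\<in>{1..k}. (usd_mean n u (x i))\<^sup>2) / c ^ 3
    = (\<Sum>i\<in>{1..k}. expect M (\<lambda>f. (X i f)\<^sup>2)) / c\<^sup>2 - 2 / c\<^sup>2
      - 4 * (\<Sum>i\<in>{1..k}. (expect M (X i))\<^sup>2) / c ^ 3"
    by (simp only: moments)
  also have "\<dots> \<le> expect M (\<lambda>f. collision_ratio (\<lambda>i. X i f) {1..k})"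
  proof (rule expectation_collision_ratio_ge[OF _ _ c_eq \<open>0 < c\<close>])
    show "finite (set_pmf M)"
      unfolding M_def using assms(1,2) by (intro finite_set_Pi_pmf) auto
    show "0 \<le> X i f" for i f
      by (simp add: X_def opinion_count_def)
    show "expect M (\<lambda>f. (X i f)\<^sup>2 * (\<Sum>j\<in>{1..k}. X j f))
        \<le> expect M (\<lambda>f. (X i f)\<^sup>2) * c + expect M (X i) + 2 * (expect M (X i))\<^sup>2" for i
      unfolding c_eq unfolding M_def X_def
      using assms(1,2) by (rule usd_round_third_moment) simp
  qed
  also have "\<dots> = expect (gossip_step V opn) (gamma_tilde k V)"
    using assms(1,2)
    by (simp add: gossip_step_eq_map_usd_round M_def X_def gamma_tilde_eq_collision_ratio
        alpha_eq_opinion_count collision_ratio_scale card_gt_0_iff)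
  finally show ?thesis .
qed

lemma gossip_usd_gamma_tilde_drift:
  fixes k :: nat and V :: "nat set" and opn :: "nat \<Rightarrow> nat option"
  assumes "finite V" "valid_config k V opn"
    and beta: "1/2 - 1/1000 \<le> beta k V opn" and psi: "psi k V opn \<le> 1/1000"
    and gamma: "gamma k V opn \<le> 1/1000"
  shows "gamma_tilde k V opn + 1 / (12 * real (card V)) \<le> expect (gossip_step V opn) (gamma_tilde k V)"
proof -
  define n where "n = real (card V)"
  define u where "u = opinion_count V opn None"
  define x where "x i = opinion_count V opn (Some i)" for i
  define c where "c = (\<Sum>i\<in>{1..k}. usd_mean n u (x i))"
  have n_pos: "0 < n"
    using beta by (cases "n = 0") (auto simp: beta_def alpha_def n_def)
  have alpha_eq: "alpha V opn = (\<lambda>i. x i / n)"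
    by (simp add: alpha_eq_opinion_count x_def n_def)
  have x_nonneg: "0 \<le> x i" and x_le_square: "x i \<le> (x i)\<^sup>2" for i
    using le_square[of "card {u \<in> V. opn u = Some i}"]
    by (simp_all add: x_def opinion_count_def power2_eq_square flip: of_nat_mult)
  have u_nonneg: "0 \<le> u"
    by (simp add: u_def opinion_count_def)
  have n_eq: "n = u + (\<Sum>i\<in>{1..k}. x i)"
    using decided_plus_undecided[OF assms(1,2)] by (simp add: n_def u_def x_def)
  have beta': "1/2 - 1/1000 \<le> (\<Sum>i\<in>{1..k}. x i) / n"
    using beta by (simp add: beta_def alpha_eq sum_divide_distrib)
  have psi': "(\<Sum>i\<in>{1..k}. x i) / n * (2 * ((\<Sum>i\<in>{1..k}. x i) / n) - 1)
      - (\<Sum>i\<in>{1..k}. (x i)\<^sup>2) / n\<^sup>2 \<le> 1/1000"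
    using psi by (simp add: psi_def beta_def gamma_def alpha_eq sum_divide_distrib power_divide)
  have gamma': "(\<Sum>i\<in>{1..k}. (x i)\<^sup>2) / n\<^sup>2 \<le> 1/1000"
    using gamma by (simp add: gamma_def alpha_eq sum_divide_distrib power_divide)
  note drift = usd_drift_from_moments[OF finite_atLeastAtMost x_nonneg u_nonneg n_eq n_pos
      x_le_square beta' psi' gamma', folded c_def]
  have "gamma_tilde k V opn + 1 / (12 * real (card V)) = collision_ratio x {1..k} + 1 / (12 * n)"
    using n_pos by (simp add: gamma_tilde_eq_collision_ratio alpha_eq collision_ratio_scale n_def)
  also have "\<dots> \<le> (\<Sum>i\<in>{1..k}. (usd_mean n u (x i))\<^sup>2 + usd_variance n u (x i)) / c\<^sup>2 - 2 / c\<^sup>2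
      - 4 * (\<Sum>i\<in>{1..k}. (usd_mean n u (x i))\<^sup>2) / c ^ 3"
    by (rule drift(2))
  also have "\<dots> \<le> expect (gossip_step V opn) (gamma_tilde k V)"
    unfolding c_def n_def u_def x_def
    by (rule expectation_gamma_tilde_gossip_step_ge[OF assms(1)])
      (use n_pos drift(1) in \<open>simp_all add: n_def c_def u_def x_def card_gt_0_iff\<close>)
  finally show ?thesis .
qed

theorem mainTheorem9:
  shows "\<exists>\<epsilon>0::real. \<epsilon>0 > 0 \<and>
    (\<forall>(k::nat) (V::nat set) (opn::nat \<Rightarrow> nat option).
       finite V \<longrightarrow> valid_config k V opn \<longrightarrow>
       beta k V opn \<ge> 1/2 - \<epsilon>0 \<longrightarrow> psi k V opn \<le> \<epsilon>0 \<longrightarrow> gamma k V opn \<le> \<epsilon>0 \<longrightarrow>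
       measure_pmf.expectation (gossip_step V opn) (gamma_tilde k V)
         \<ge> gamma_tilde k V opn + 1 / (12 * real (card V)))"
  by (intro exI[of _ "1/1000"] conjI allI impI) (simp_all add: gossip_usd_gamma_tilde_drift)

end
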